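(* Let $m \ge 1$ and let $D_1, \ldots, D_m, D_{m+1} > 0$ be feature dispersions (defined in the context) of a data set with $m+1$ features, where feature $m+1$ is an added (noisy) feature. For $v \in \{1, \ldots, m+1\}$ let $\alpha_v = \dfrac{1}{\sum_{j=1}^{m+1} \frac{D_v}{D_j}}$ be the FIR factors computed over all $m+1$ features. Then, with $D_1,\ldots,D_m$ fixed, \[ \lim_{D_{m+1} \to \infty} \sum_{v=1}^{m+1} \alpha_v^2 D_v = \frac{1}{\sum_{j=1}^m \frac{1}{D_j}}, \] which is the value of $WCSS_w = \sum_{v=1}^m \alpha_v^2 D_v$ obtained on the original $m$ features (with the FIR factors computed over those $m$ features). That is, $WCSS_w$ is asymptotically unaffected by adding an arbitrarily noisy feature.
   Context: Let $X = \{x_1, \ldots, x_n\}$ be a data set whose points are described by features, $x_{iv}$ denoting the value of feature $v$ for $x_i$. Let $C = \{C_1, \ldots, C_k\}$ be a partition of $X$ into clusters with centroids $z_l$ (component-wise means). The dispersion of feature $v$ is $D_v = \sum_{l=1}^k \sum_{x_i \in C_l} (x_{iv} - z_{lv})^2$, assumed positive for every feature. For a set of features $\{1,\ldots,p\}$, the FIR factors are $\alpha_v = 1/\sum_{j=1}^p (D_v/D_j)$ and the weighted objective is $WCSS_w = \sum_{v=1}^p \alpha_v^2 D_v$. *)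

theory Defs
  imports "HOL-Analysis.Analysis"
begin

definition fir_factor :: "nat set \<Rightarrow> (nat \<Rightarrow> real) \<Rightarrow> nat \<Rightarrow> real" where
  "fir_factor F D v = 1 / (\<Sum>j\<in>F. D v / D j)"

definition wcss_w :: "nat set \<Rightarrow> (nat \<Rightarrow> real) \<Rightarrow> real" where
  "wcss_w F D = (\<Sum>v\<in>F. (fir_factor F D v)^2 * D v)"

end

theory Submission
  imports Defs
begin

text \<open>Since \<open>\<alpha>\<^sub>v = 1 / (D\<^sub>v \<Sum>\<^sub>j 1/D\<^sub>j)\<close>, the weighted objective collapses to the harmonic-type
  quantity \<open>1 / \<Sum>\<^sub>j 1/D\<^sub>j\<close>. An added feature with dispersion \<open>t\<close> only contributes the
  summand \<open>1/t\<close> to the denominator, which vanishes as \<open>t \<rightarrow> \<infinity>\<close>.\<close>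

lemma fir_factor_eq:
  assumes "v \<in> F"
  shows "fir_factor F D v = 1 / (D v * (\<Sum>j\<in>F. 1 / D j))"
  unfolding fir_factor_def by (simp add: sum_distrib_left)

text \<open>No finiteness or positivity is needed: for infinite \<open>F\<close> or vanishing \<open>\<Sum>\<^sub>j 1/D\<^sub>j\<close>
  both sides are \<open>0\<close> by the conventions \<open>sum f F = 0\<close> and \<open>x / 0 = 0\<close>.\<close>
lemma wcss_w_eq_inverse_sum_inverse:
  assumes "\<And>j. j \<in> F \<Longrightarrow> D j \<noteq> 0"
  shows "wcss_w F D = 1 / (\<Sum>j\<in>F. 1 / D j)"
proof -
  define S where "S = (\<Sum>j\<in>F. 1 / D j)"
  have "wcss_w F D = (\<Sum>v\<in>F. (1 / D v) / S\<^sup>2)"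
    unfolding wcss_w_def
  proof (rule sum.cong)
    fix v assume "v \<in> F"
    with assms show "(fir_factor F D v)\<^sup>2 * D v = (1 / D v) / S\<^sup>2"
      by (simp add: fir_factor_eq S_def field_simps power2_eq_square)
  qed simp
  also have "\<dots> = S / S\<^sup>2"
    unfolding S_def by (simp add: sum_divide_distrib)
  also have "\<dots> = 1 / S"
    by (simp add: power2_eq_square)
  finally show ?thesis
    unfolding S_def .
qed

lemma wcss_w_insert_tendsto:
  assumes "finite F" "F \<noteq> {}" "k \<notin> F" "\<And>j. j \<in> F \<Longrightarrow> D j > 0"
  shows "((\<lambda>t. wcss_w (insert k F) (D(k := t))) \<longlongrightarrow> wcss_w F D) at_top"
proof -
  define S where "S = (\<Sum>j\<in>F. 1 / D j)"
  have "S > 0"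
    unfolding S_def using assms by (intro sum_pos) auto
  have closed_form: "\<forall>\<^sub>F t in at_top. wcss_w (insert k F) (D(k := t)) = 1 / (S + 1 / t)"
    using eventually_gt_at_top[of "0::real"]
  proof eventually_elim
    case (elim t)
    have "(D(k := t)) j \<noteq> 0" if "j \<in> insert k F" for j
      using that elim assms(4) by (cases "j = k") force+
    then have "wcss_w (insert k F) (D(k := t)) = 1 / (\<Sum>j\<in>insert k F. 1 / (D(k := t)) j)"
      by (rule wcss_w_eq_inverse_sum_inverse)
    also have "(\<Sum>j\<in>insert k F. 1 / (D(k := t)) j) = (\<Sum>j\<in>F. 1 / (D(k := t)) j) + 1 / t"
      using \<open>finite F\<close> \<open>k \<notin> F\<close> by simp
    also have "(\<Sum>j\<in>F. 1 / (D(k := t)) j) = S"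
      unfolding S_def using \<open>k \<notin> F\<close> by (intro sum.cong) auto
    finally show ?case .
  qed
  have "((\<lambda>t::real. 1 / (S + inverse t)) \<longlongrightarrow> 1 / (S + 0)) at_top"
    using \<open>S > 0\<close> by (intro tendsto_intros tendsto_inverse_0_at_top filterlim_ident) auto
  then have "((\<lambda>t::real. 1 / (S + 1 / t)) \<longlongrightarrow> 1 / S) at_top"
    by (simp add: inverse_eq_divide)
  moreover have "wcss_w F D = 1 / S"
    unfolding S_def using assms(4) by (intro wcss_w_eq_inverse_sum_inverse) fastforce
  ultimately show ?thesis
    using tendsto_cong[OF closed_form] by simp
qed

theorem mainTheorem3:
  fixes m :: nat and D :: "nat \<Rightarrow> real"
  assumes "m \<ge> 1"
    and "\<And>j. j \<in> {1..m} \<Longrightarrow> D j > 0"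
  shows "((\<lambda>t. wcss_w {1..m+1} (D(m+1 := t))) \<longlongrightarrow> 1 / (\<Sum>j=1..m. 1 / D j)) at_top
     \<and> wcss_w {1..m} D = 1 / (\<Sum>j=1..m. 1 / D j)"
proof
  show closed_form: "wcss_w {1..m} D = 1 / (\<Sum>j=1..m. 1 / D j)"
    using assms(2) by (intro wcss_w_eq_inverse_sum_inverse) fastforce
  have "{1..m+1} = insert (m+1) {1..m}"
    by auto
  moreover have "((\<lambda>t. wcss_w (insert (m+1) {1..m}) (D(m+1 := t))) \<longlongrightarrow> wcss_w {1..m} D) at_top"
    using assms by (intro wcss_w_insert_tendsto) auto
  ultimately show "((\<lambda>t. wcss_w {1..m+1} (D(m+1 := t))) \<longlongrightarrow> 1 / (\<Sum>j=1..m. 1 / D j)) at_top"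
    by (simp only: closed_form)
qed

end
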